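(* Let $g(x)=a(x)/f(x)$ be a rate-1 convolutional code over $GF(q)$, let $z(x)$ be the minimum complementary polynomial of $a(x)$, of degree $l$, let $N=n+l$, and let $h_1,\dots,h_{N-1}$ be defined by $f(x)z(x)=1+h_1x+\cdots+h_{N-1}x^{N-1}+x^N$. The dual encoder $\bar C$ realizes $q(x)=1/g(x)=\frac{f(x)z(x)}{a(x)z(x)}=1+\frac{h_1x+\cdots+h_{N-1}x^{N-1}}{1+x^N}$. (i) If $b_1,b_2,\dots\in GF(q)$ is an information sequence and $c_1,c_2,\dots$ is the codeword of $g$ generated from it, i.e. $c(x)f(x)=b(x)a(x)$ as formal power series, then $\bar C$ with input $c_1,c_2,\dots$ outputs exactly $b_1,b_2,\dots$. (ii) Let $c_1,c_2,\dots$ be mutually independent $GF(q)$-valued random variables with $\Pr(c_k=\omega)=P_{c_k}(\omega)$. Let $S'_j(k)$ and $b_k$ be the random register contents and outputs obtained by running $\bar C$ on this input. Then for every $k\ge1$ the following hold. - The random variables $c_k,S'_1(k-1),\dots,S'_N(k-1)$ are mutually independent. - For every $j$ and every $\omega$, $\Pr(S'_j(k)=\omega)=\overrightarrow P_j(k)(\omega)$. - For every $\omega\in GF(q)$, $$Q_k(\omega)=\sum_{\substack{u'\in GF(q)^N,\ c\in GF(q)\\ c+\sum_{j=1}^{N-1}h_ju'_j=\omega}}\ \prod_{j=1}^{N}\overrightarrow P_j(k-1)(u'_j)\,P_{c_k}(c)=\Pr(b_k=\omega).$$ Hence the dual encoder, run on pmf vectors with convolutions in place of additions, outputs the (forward)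 pmf of the information symbols.
   Context: Standing conventions. Let $q=2^m$, so $GF(q)$ has characteristic 2 and $-x=x$. A rate-1 convolutional code over $GF(q)$ is given by $g(x)=a(x)/f(x)$ with $a(x)=1+a_1x+\cdots+a_{n-1}x^{n-1}+x^n$ and $f(x)=1+f_1x+\cdots+f_{n-1}x^{n-1}+x^n$, where $a_i,f_i\in GF(q)$ and $n\ge1$. The minimum complementary polynomial of $a(x)$ is the polynomial $z(x)=1+z_1x+\cdots+z_{l-1}x^{l-1}+x^l$ of smallest degree $l\ge0$ such that $a(x)z(x)=1+x^{n+l}$. Put $N=n+l$ and define $h_1,\dots,h_{N-1}\in GF(q)$ by $f(x)z(x)=1+h_1x+\cdots+h_{N-1}x^{N-1}+x^N$. Dual encoder $\bar C$ (realizing $1/g$). It has registers $S'_1(k),\dots,S'_N(k)\in GF(q)$, with $S'_j(0)=0$ for all $j$. On input $c_1,c_2,\dots$ it updates $S'_1(k)=c_k+S'_N(k-1)$ and $S'_j(k)=S'_{j-1}(k-1)$ for $2\le j\le N$, and it outputs $b_k=c_k+\sum_{j=1}^{N-1}h_jS'_j(k-1)$. Pmf vectors are real vectors indexed by $GF(q)$. The following operations are used. - Convolution: $(P*Q)(\omega)=\sum_{c\in GF(q)}P(c)Q(\omega-c)$. - For $h\in GF(q)$, the permutation $\Pi_hP$ is given by $(\Pi_hP)(\omega)=\sum_{u:\,hu=\omega}P(u)$; for $h\neq0$ this is $(\Pi_hP)(hu)=P(u)$. - $\delta_0$ denotes the point mass at $0$. Forward dual encoder on pmfs. Given pmf vectors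 $P_{c_1},P_{c_2},\dots$, set $\overrightarrow P_j(0)=\delta_0$ for all $j$. For $k\ge1$ set $\overrightarrow P_1(k)=P_{c_k}*\overrightarrow P_N(k-1)$ and $\overrightarrow P_j(k)=\overrightarrow P_{j-1}(k-1)$ for $2\le j\le N$. The output is $Q_k=P_{c_k}*\Pi_{h_1}\overrightarrow P_1(k-1)*\cdots*\Pi_{h_{N-1}}\overrightarrow P_{N-1}(k-1)$. *)

theory Defs
  imports "HOL-Probability.Probability" "HOL-Computational_Algebra.Polynomial_FPS"
begin

text \<open>Minimum complementary polynomial z of a: smallest degree l with a z = 1 + x^(n+l),
  where n = degree a.  (Any such z automatically has the shape 1 + ... + x^l.)\<close>
definition is_min_comp_poly :: "'a::field poly \<Rightarrow> 'a poly \<Rightarrow> bool" where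
  "is_min_comp_poly a z \<longleftrightarrow>
     a * z = 1 + monom 1 (degree a + degree z) \<and>
     (\<forall>z'. a * z' = 1 + monom 1 (degree a + degree z') \<longrightarrow> degree z \<le> degree z')"

text \<open>Dual encoder registers S'_j(k) (j = 1..N) on input c_1, c_2, ... (c 0 unused).\<close>
fun dual_reg :: "nat \<Rightarrow> (nat \<Rightarrow> 'a::comm_ring_1) \<Rightarrow> nat \<Rightarrow> nat \<Rightarrow> 'a" where
  "dual_reg N c 0 j = 0"
| "dual_reg N c (Suc k) j =
     (if j = 1 then c (Suc k) + dual_reg N c k N else dual_reg N c k (j - 1))"

definition dual_out :: "(nat \<Rightarrow> 'a::comm_ring_1) \<Rightarrow> nat \<Rightarrow> (nat \<Rightarrow> 'a) \<Rightarrow> nat \<Rightarrow> 'a" where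
  "dual_out h N c k = c k + (\<Sum>j = 1..N - 1. h j * dual_reg N c (k - 1) j)"

definition pmf_conv :: "('a::{finite,comm_ring_1} \<Rightarrow> real) \<Rightarrow> ('a \<Rightarrow> real) \<Rightarrow> 'a \<Rightarrow> real" where
  "pmf_conv P Q \<omega> = (\<Sum>c\<in>UNIV. P c * Q (\<omega> - c))"

definition pmf_perm :: "'a::{finite,comm_ring_1} \<Rightarrow> ('a \<Rightarrow> real) \<Rightarrow> 'a \<Rightarrow> real" where
  "pmf_perm h P \<omega> = (\<Sum>u | h * u = \<omega>. P u)"

definition delta0 :: "'a::zero \<Rightarrow> real" where
  "delta0 \<omega> = (if \<omega> = 0 then 1 else 0)"

fun fwd_pmf :: "nat \<Rightarrow> (nat \<Rightarrow> 'a::{finite,comm_ring_1} \<Rightarrow> real) \<Rightarrow> nat \<Rightarrow> nat \<Rightarrow> 'a \<Rightarrow> real" where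
  "fwd_pmf N Pc 0 j = delta0"
| "fwd_pmf N Pc (Suc k) j =
     (if j = 1 then pmf_conv (Pc (Suc k)) (fwd_pmf N Pc k N) else fwd_pmf N Pc k (j - 1))"

definition fwd_out :: "(nat \<Rightarrow> 'a::{finite,comm_ring_1}) \<Rightarrow> nat \<Rightarrow> (nat \<Rightarrow> 'a \<Rightarrow> real) \<Rightarrow> nat \<Rightarrow> 'a \<Rightarrow> real" where
  "fwd_out h N Pc k =
     foldl pmf_conv (Pc k) (map (\<lambda>j. pmf_perm (h j) (fwd_pmf N Pc (k - 1) j)) [1..<N])"

end

theory Submission
  imports Defs
begin

text \<open>
  (i) As power series, register j of the dual encoder is x^(j-1) times register 1, and register 1
  is x times the input plus register N. Hence (1 - x^N) S'_1 = x c, and the output series b' satisfies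
  (1 - x^N) b' = f z c = z a b = (1 - x^N) b, because a z = 1 + x^N = 1 - x^N in characteristic 2.

  (ii) Register j after k steps is the sum of the inputs c_t with 1 <= t <= k and
  k - t = j - 1 (mod N). These index sets are disjoint, so c_k, S'_1(k-1), ..., S'_N(k-1) are
  functions of disjoint blocks of independent inputs and therefore independent. The pmf of a sum
  of independent variables is the convolution of their pmfs; this gives the register pmfs by
  induction on k and the output pmf Q_k.
\<close>

lemma fps_of_poly_eq_monic_unit:
  fixes p :: "'a::comm_ring_1 poly"
  assumes deg: "degree p = N" and N: "N \<ge> 1" and p0: "coeff p 0 = 1" and lead: "lead_coeff p = 1"
  shows "fps_of_poly p = 1 + fps_X ^ N + (\<Sum>j = 1..N - 1. fps_const (coeff p j) * fps_X ^ j)"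
proof (rule fps_ext)
  fix i
  have "(\<Sum>j = 1..N - 1. fps_nth (fps_const (coeff p j) * fps_X ^ j) i)
      = (\<Sum>j \<in> {1..N - 1}. if j = i then coeff p j else 0)"
    by (rule sum.cong) auto
  also have "\<dots> = (if i \<in> {1..N - 1} then coeff p i else 0)"
    by simp
  finally show "fps_nth (fps_of_poly p) i =
      fps_nth (1 + fps_X ^ N + (\<Sum>j = 1..N - 1. fps_const (coeff p j) * fps_X ^ j)) i"
    using deg N p0 lead coeff_eq_0[of p i]
    by (cases "i = 0"; cases "i = N"; cases "i < N") (auto simp: fps_sum_nth)
qed

lemma fps_dual_reg_1:
  "Abs_fps (\<lambda>i. dual_reg N c i 1) = fps_X * (Abs_fps (\<lambda>i. c (Suc i)) + Abs_fps (\<lambda>i. dual_reg N c i N))"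
proof (rule fps_ext)
  fix i
  show "fps_nth (Abs_fps (\<lambda>i. dual_reg N c i 1)) i =
      fps_nth (fps_X * (Abs_fps (\<lambda>i. c (Suc i)) + Abs_fps (\<lambda>i. dual_reg N c i N))) i"
    by (cases i) simp_all
qed

lemma fps_dual_reg_shift:
  "j \<ge> 1 \<Longrightarrow> Abs_fps (\<lambda>i. dual_reg N c i j) = fps_X ^ (j - 1) * Abs_fps (\<lambda>i. dual_reg N c i 1)"
proof (induction j)
  case (Suc j)
  show ?case
  proof (cases "j = 0")
    case False
    have "Abs_fps (\<lambda>i. dual_reg N c i (Suc j)) = fps_X * Abs_fps (\<lambda>i. dual_reg N c i j)"
    proof (rule fps_ext)
      fix i
      show "fps_nth (Abs_fps (\<lambda>i. dual_reg N c i (Suc j))) i =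
          fps_nth (fps_X * Abs_fps (\<lambda>i. dual_reg N c i j)) i"
        using False by (cases i) simp_all
    qed
    with Suc False show ?thesis
      by (simp add: mult.assoc power_eq_if)
  qed simp
qed simp

lemma fps_dual_reg_1_eq:
  fixes c :: "nat \<Rightarrow> 'a::comm_ring_1"
  assumes N: "N \<ge> 1"
  shows "(1 - fps_X ^ N) * Abs_fps (\<lambda>i. dual_reg N c i 1) = fps_X * Abs_fps (\<lambda>i. c (Suc i))"
proof -
  define R where "R = Abs_fps (\<lambda>i. dual_reg N c i 1)"
  have XN: "fps_X * fps_X ^ (N - 1) = (fps_X ^ N :: 'a fps)"
    using N power_minus_mult[of N "fps_X :: 'a fps"] by (simp only: mult.commute)
  have "R = fps_X * Abs_fps (\<lambda>i. c (Suc i)) + (fps_X * fps_X ^ (N - 1)) * R"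
    using fps_dual_reg_1[of N c] fps_dual_reg_shift[OF N, of N c]
    by (simp only: R_def distrib_left mult.assoc)
  also have "\<dots> = fps_X * Abs_fps (\<lambda>i. c (Suc i)) + fps_X ^ N * R"
    by (simp only: XN)
  finally have R: "R = fps_X * Abs_fps (\<lambda>i. c (Suc i)) + fps_X ^ N * R" .
  have "(1 - fps_X ^ N) * R = R - fps_X ^ N * R"
    by (simp add: left_diff_distrib)
  also have "\<dots> = fps_X * Abs_fps (\<lambda>i. c (Suc i))"
    by (subst (1) R) simp
  finally show ?thesis
    unfolding R_def .
qed

lemma fps_dual_out:
  fixes c h :: "nat \<Rightarrow> 'a::comm_ring_1"
  assumes N: "N \<ge> 1"
  shows "(1 - fps_X ^ N) * Abs_fps (\<lambda>i. dual_out h N c (Suc i)) =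
    (1 - fps_X ^ N + (\<Sum>j = 1..N - 1. fps_const (h j) * fps_X ^ j)) * Abs_fps (\<lambda>i. c (Suc i))"
proof -
  define C where "C = Abs_fps (\<lambda>i. c (Suc i))"
  define R where "R = Abs_fps (\<lambda>i. dual_reg N c i 1)"
  have "Abs_fps (\<lambda>i. dual_out h N c (Suc i)) =
      C + (\<Sum>j = 1..N - 1. fps_const (h j) * Abs_fps (\<lambda>i. dual_reg N c i j))"
    by (rule fps_ext) (simp add: C_def dual_out_def fps_sum_nth)
  also have "\<dots> = C + (\<Sum>j = 1..N - 1. fps_const (h j) * fps_X ^ (j - 1) * R)"
    unfolding R_def mult.assoc
    by (intro sum.cong arg_cong2[where f = "(+)"] arg_cong2[where f = "(*)"] refl fps_dual_reg_shift) simp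
  finally have "(1 - fps_X ^ N) * Abs_fps (\<lambda>i. dual_out h N c (Suc i)) =
      (1 - fps_X ^ N) * C + (\<Sum>j = 1..N - 1. fps_const (h j) * fps_X ^ (j - 1) * ((1 - fps_X ^ N) * R))"
    by (simp add: distrib_left sum_distrib_left ac_simps)
  also have "\<dots> = (1 - fps_X ^ N) * C + (\<Sum>j = 1..N - 1. fps_const (h j) * fps_X ^ j * C)"
  proof (intro arg_cong2[where f="(+)"] refl sum.cong)
    fix j :: nat
    assume "j \<in> {1..N - 1}"
    then have Xj: "fps_X ^ (j - 1) * fps_X = (fps_X ^ j :: 'a fps)"
      by (intro power_minus_mult) simp
    show "fps_const (h j) * fps_X ^ (j - 1) * ((1 - fps_X ^ N) * R) = fps_const (h j) * fps_X ^ j * C"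
      unfolding R_def fps_dual_reg_1_eq[OF N] C_def by (simp only: mult.assoc flip: Xj)
  qed
  finally show ?thesis
    by (simp add: C_def distrib_right sum_distrib_right)
qed

lemma one_minus_fps_X_power_neq_0:
  assumes "N \<ge> 1"
  shows "1 - fps_X ^ N \<noteq> (0 :: 'a::comm_ring_1 fps)"
proof
  have "fps_nth (1 - fps_X ^ N :: 'a fps) 0 = 1"
    using assms by (simp only: fps_sub_nth fps_one_nth fps_X_power_nth) simp
  moreover assume "1 - fps_X ^ N = (0 :: 'a fps)"
  ultimately show False
    by simp
qed

lemma dual_out_eq_info:
  fixes A Z F :: "'a::idom fps" and b c h :: "nat \<Rightarrow> 'a"
  assumes N: "N \<ge> 1"
    and AZ: "A * Z = 1 - fps_X ^ N"
    and FZ: "F * Z = 1 - fps_X ^ N + (\<Sum>j = 1..N - 1. fps_const (h j) * fps_X ^ j)"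
    and code: "F * Abs_fps (\<lambda>i. c (Suc i)) = A * Abs_fps (\<lambda>i. b (Suc i))"
    and k: "k \<ge> 1"
  shows "dual_out h N c k = b k"
proof -
  have "(1 - fps_X ^ N) * Abs_fps (\<lambda>i. dual_out h N c (Suc i)) = Z * (F * Abs_fps (\<lambda>i. c (Suc i)))"
    unfolding fps_dual_out[OF N] FZ[symmetric] by (simp only: ac_simps)
  also have "\<dots> = (1 - fps_X ^ N) * Abs_fps (\<lambda>i. b (Suc i))"
    unfolding code AZ[symmetric] by (simp only: ac_simps)
  finally have "Abs_fps (\<lambda>i. dual_out h N c (Suc i)) = Abs_fps (\<lambda>i. b (Suc i))"
    by (rule mult_left_cancel[THEN iffD1, OF one_minus_fps_X_power_neq_0[OF N]])
  then have "dual_out h N c (Suc (k - 1)) = b (Suc (k - 1))"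
    by (metis fps_nth_Abs_fps)
  with k show ?thesis
    by simp
qed

context prob_space
begin

definition pmf_vec :: "('a \<Rightarrow> 'b) \<Rightarrow> 'b \<Rightarrow> real" where
  "pmf_vec X x = prob {\<omega> \<in> space M. X \<omega> = x}"

lemma prob_eq_sum_fibres:
  assumes V: "finite V" "\<And>\<omega>. \<omega> \<in> space M \<Longrightarrow> X \<omega> \<in> V"
    and events: "\<And>v. v \<in> V \<Longrightarrow> {\<omega> \<in> space M. X \<omega> = v} \<in> events"
  shows "prob {\<omega> \<in> space M. P (X \<omega>)} = (\<Sum>v \<in> {v \<in> V. P v}. prob {\<omega> \<in> space M. X \<omega> = v})"
proof -
  have "{\<omega> \<in> space M. P (X \<omega>)} = (\<Union>v \<in> {v \<in> V. P v}. {\<omega> \<in> space M. X \<omega> = v})"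
    using V(2) by auto
  also have "prob \<dots> = (\<Sum>v \<in> {v \<in> V. P v}. prob {\<omega> \<in> space M. X \<omega> = v})"
    using V(1) events by (intro finite_measure_finite_Union) (auto simp: disjoint_family_on_def)
  finally show ?thesis .
qed

lemma pmf_vec_prod_indep_vars:
  assumes ind: "indep_vars (\<lambda>_. count_space UNIV) Y I"
    and J: "J \<subseteq> I" "finite J" "J \<noteq> {}"
  shows "prob {\<omega> \<in> space M. \<forall>l\<in>J. Y l \<omega> = u l} = (\<Prod>l\<in>J. pmf_vec (Y l) (u l))"
proof -
  have "{\<omega> \<in> space M. \<forall>l\<in>J. Y l \<omega> = u l} = (\<Inter>l\<in>J. Y l -` {u l} \<inter> space M)"
    using J(3) by auto
  also have "prob \<dots> = (\<Prod>l\<in>J. prob (Y l -` {u l} \<inter> space M))"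
    using indep_varsD[OF ind J(3,2,1)] by simp
  finally show ?thesis
    by (simp add: pmf_vec_def vimage_def Int_def conj_commute)
qed

lemma indep_vars_blocks:
  fixes Y :: "'i \<Rightarrow> 'a \<Rightarrow> 'b::finite"
  assumes ind: "indep_vars (\<lambda>_. count_space UNIV) Y I"
    and K: "\<And>l. l \<in> L \<Longrightarrow> K l \<subseteq> I" "\<And>l. l \<in> L \<Longrightarrow> finite (K l)"
    and disj: "disjoint_family_on K L"
  shows "indep_vars (\<lambda>_. count_space UNIV) (\<lambda>l \<omega>. F l (restrict (\<lambda>t. Y t \<omega>) (K l))) L"
proof -
  have "indep_vars (\<lambda>l. PiM (K l) (\<lambda>_. count_space UNIV)) (\<lambda>l \<omega>. restrict (\<lambda>t. Y t \<omega>) (K l)) L"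
    by (rule indep_vars_restrict[OF ind K(1) disj])
  moreover have "PiM (K l) (\<lambda>_. count_space UNIV) = count_space (PiE (K l) (\<lambda>_. UNIV :: 'b set))"
    if "l \<in> L" for l
    by (rule count_space_PiM_finite) (use K(2)[OF that] in auto)
  ultimately have "indep_vars (\<lambda>l. count_space (PiE (K l) (\<lambda>_. UNIV)))
      (\<lambda>l \<omega>. restrict (\<lambda>t. Y t \<omega>) (K l)) L"
    by (simp cong: indep_vars_cong)
  then show ?thesis
    by (rule indep_vars_compose2) simp
qed

lemma pmf_vec_add_indep_vars:
  fixes Y :: "'i \<Rightarrow> 'a \<Rightarrow> 'b::{finite,comm_ring_1}"
  assumes ind: "indep_vars (\<lambda>_. count_space UNIV) Y I" and ij: "i \<in> I" "j \<in> I" "i \<noteq> j"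
  shows "pmf_vec (\<lambda>\<omega>. Y i \<omega> + Y j \<omega>) = pmf_conv (pmf_vec (Y i)) (pmf_vec (Y j))"
proof
  fix x
  define E where "E d = {\<omega> \<in> space M. \<forall>l\<in>{i, j}. Y l \<omega> = (if l = i then d else x - d)}" for d
  have "{\<omega> \<in> space M. Y i \<omega> + Y j \<omega> = x} = (\<Union>d. E d)"
    using ij(3) by (auto simp: E_def eq_diff_eq add.commute)
  moreover have "E d \<in> events" for d
  proof -
    have "random_variable (count_space UNIV) (Y l)" if "l \<in> I" for l
      using ind that by (simp add: indep_vars_def)
    with ij show ?thesis
      by (auto simp: E_def)
  qed
  ultimately have "pmf_vec (\<lambda>\<omega>. Y i \<omega> + Y j \<omega>) x = (\<Sum>d\<in>UNIV. prob (E d))"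
    unfolding pmf_vec_def
    by (auto intro!: finite_measure_finite_Union simp: disjoint_family_on_def E_def)
  also have "\<dots> = (\<Sum>d\<in>UNIV. pmf_vec (Y i) d * pmf_vec (Y j) (x - d))"
  proof (rule sum.cong[OF refl])
    fix d
    have "prob (E d) = (\<Prod>l\<in>{i, j}. pmf_vec (Y l) (if l = i then d else x - d))"
      unfolding E_def using ij by (intro pmf_vec_prod_indep_vars[OF ind]) auto
    with ij(3) show "prob (E d) = pmf_vec (Y i) d * pmf_vec (Y j) (x - d)"
      by simp
  qed
  finally show "pmf_vec (\<lambda>\<omega>. Y i \<omega> + Y j \<omega>) x = pmf_conv (pmf_vec (Y i)) (pmf_vec (Y j)) x"
    by (simp add: pmf_conv_def)
qed

lemma pmf_vec_scale:
  fixes X :: "'a \<Rightarrow> 'b::{finite,comm_ring_1}"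
  assumes X: "random_variable (count_space UNIV) X"
  shows "pmf_vec (\<lambda>\<omega>. h * X \<omega>) = pmf_perm h (pmf_vec X)"
proof
  fix y
  have "prob {\<omega> \<in> space M. h * X \<omega> = y} = (\<Sum>u \<in> {u \<in> UNIV. h * u = y}. prob {\<omega> \<in> space M. X \<omega> = u})"
    using X by (intro prob_eq_sum_fibres) auto
  then show "pmf_vec (\<lambda>\<omega>. h * X \<omega>) y = pmf_perm h (pmf_vec X) y"
    by (simp add: pmf_vec_def pmf_perm_def)
qed

lemma pmf_vec_linear_comb_foldl:
  fixes Y :: "nat \<Rightarrow> 'a \<Rightarrow> 'b::{finite,comm_ring_1}" and h :: "nat \<Rightarrow> 'b"
  assumes ind: "indep_vars (\<lambda>_. count_space UNIV) Y {0..n}"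
  shows "m \<le> n \<Longrightarrow> pmf_vec (\<lambda>\<omega>. Y 0 \<omega> + (\<Sum>j = 1..m. h j * Y j \<omega>)) =
    foldl pmf_conv (pmf_vec (Y 0)) (map (\<lambda>j. pmf_perm (h j) (pmf_vec (Y j))) [1..<Suc m])"
proof (induction m)
  case (Suc m)
  define W where "W = (\<lambda>\<omega>. Y 0 \<omega> + (\<Sum>j = 1..m. h j * Y j \<omega>))"
  define Z where "Z l = (if l = 0 then W else (\<lambda>\<omega>. h (Suc m) * Y (Suc m) \<omega>))" for l :: nat
  define K where "K l = (if l = 0 then {0..m} else {Suc m})" for l :: nat
  define F where "F l g = (if l = 0 then g 0 + (\<Sum>j = 1..m. h j * g j) else h (Suc m) * g (Suc m))"
    for l :: nat and g :: "nat \<Rightarrow> 'b"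
  have indF: "indep_vars (\<lambda>_. count_space UNIV) (\<lambda>l \<omega>. F l (restrict (\<lambda>t. Y t \<omega>) (K l))) {0, 1}"
    using Suc.prems by (intro indep_vars_blocks[OF ind]) (auto simp: K_def disjoint_family_on_def)
  have FZ: "(\<lambda>\<omega>. F l (restrict (\<lambda>t. Y t \<omega>) (K l))) = Z l" if "l \<in> {0, 1}" for l
    using that by (auto simp: F_def K_def Z_def W_def intro!: sum.cong)
  have "pmf_vec (\<lambda>\<omega>. Z 0 \<omega> + Z 1 \<omega>) = pmf_conv (pmf_vec (Z 0)) (pmf_vec (Z 1))"
    using iffD1[OF indep_vars_cong[OF refl FZ refl] indF] by (rule pmf_vec_add_indep_vars) auto
  moreover have "random_variable (count_space UNIV) (Y (Suc m))"
    using ind Suc.prems by (simp add: indep_vars_def)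
  then have "pmf_vec (Z 1) = pmf_perm (h (Suc m)) (pmf_vec (Y (Suc m)))"
    by (simp add: Z_def pmf_vec_scale)
  moreover have "pmf_vec (Z 0) = foldl pmf_conv (pmf_vec (Y 0)) (map (\<lambda>j. pmf_perm (h j) (pmf_vec (Y j))) [1..<Suc m])"
    using Suc by (simp only: Z_def W_def if_True) simp
  moreover have "(\<lambda>\<omega>. Z 0 \<omega> + Z 1 \<omega>) = (\<lambda>\<omega>. Y 0 \<omega> + (\<Sum>j = 1..Suc m. h j * Y j \<omega>))"
    by (simp add: Z_def W_def add.assoc)
  ultimately show ?case
    by simp
qed simp

lemma pmf_vec_linear_comb_sum:
  fixes Y :: "nat \<Rightarrow> 'a \<Rightarrow> 'b::{finite,comm_ring_1}" and h :: "nat \<Rightarrow> 'b"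
  assumes ind: "indep_vars (\<lambda>_. count_space UNIV) Y {0..n}" and m: "m \<le> n"
  shows "pmf_vec (\<lambda>\<omega>. Y 0 \<omega> + (\<Sum>j = 1..m. h j * Y j \<omega>)) x =
    (\<Sum>(u, d) \<in> {(u, d). u \<in> PiE {1..n} (\<lambda>_. UNIV) \<and> d + (\<Sum>j = 1..m. h j * u j) = x}.
      (\<Prod>j = 1..n. pmf_vec (Y j) (u j)) * pmf_vec (Y 0) d)"
proof -
  define X where "X \<omega> = (restrict (\<lambda>j. Y j \<omega>) {1..n}, Y 0 \<omega>)" for \<omega>
  define V where "V = PiE {1..n} (\<lambda>_. UNIV :: 'b set) \<times> (UNIV :: 'b set)"
  define P where "P = (\<lambda>(u, d). d + (\<Sum>j = 1..m. h j * u j) = x)"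
  have fibre: "{\<omega> \<in> space M. X \<omega> = (u, d)} = {\<omega> \<in> space M. \<forall>l\<in>{0..n}. Y l \<omega> = (u(0 := d)) l}"
    if "(u, d) \<in> V" for u d
    using that by (force simp: X_def V_def PiE_iff extensional_def)
  have "pmf_vec (\<lambda>\<omega>. Y 0 \<omega> + (\<Sum>j = 1..m. h j * Y j \<omega>)) x = prob {\<omega> \<in> space M. P (X \<omega>)}"
    using m by (auto simp: pmf_vec_def X_def P_def intro!: arg_cong[where f = prob] sum.cong)
  also have "\<dots> = (\<Sum>v \<in> {v \<in> V. P v}. prob {\<omega> \<in> space M. X \<omega> = v})"
  proof (rule prob_eq_sum_fibres)
    have "random_variable (count_space UNIV) (Y l)" if "l \<in> {0..n}" for l
      using ind that by (simp add: indep_vars_def)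
    then have "{\<omega> \<in> space M. \<forall>l\<in>{0..n}. Y l \<omega> = (u(0 := d)) l} \<in> events" for u d
      by measurable
    then show "{\<omega> \<in> space M. X \<omega> = v} \<in> events" if "v \<in> V" for v
      using that fibre by (cases v) auto
  qed (auto simp: V_def X_def finite_PiE)
  also have "\<dots> = (\<Sum>(u, d) \<in> {v \<in> V. P v}. (\<Prod>j = 1..n. pmf_vec (Y j) (u j)) * pmf_vec (Y 0) d)"
  proof (rule sum.cong)
    fix v assume "v \<in> {v \<in> V. P v}"
    then obtain u d where v: "v = (u, d)" and "(u, d) \<in> V"
      by (cases v) auto
    have "prob {\<omega> \<in> space M. X \<omega> = v} = (\<Prod>l\<in>{0..n}. pmf_vec (Y l) ((u(0 := d)) l))"
      unfolding v fibre[OF \<open>(u, d) \<in> V\<close>] by (rule pmf_vec_prod_indep_vars[OF ind]) auto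
    moreover have "{0..n} = insert 0 {1..n}"
      by auto
    ultimately show "prob {\<omega> \<in> space M. X \<omega> = v} =
        (case v of (u, d) \<Rightarrow> (\<Prod>j = 1..n. pmf_vec (Y j) (u j)) * pmf_vec (Y 0) d)"
      by (simp add: v prod.insert mult.commute)
  qed simp
  also have "{v \<in> V. P v} = {(u, d). u \<in> PiE {1..n} (\<lambda>_. UNIV) \<and> d + (\<Sum>j = 1..m. h j * u j) = x}"
    by (auto simp: V_def P_def)
  finally show ?thesis .
qed


end

definition dual_reg_support :: "nat \<Rightarrow> nat \<Rightarrow> nat \<Rightarrow> nat set" where
  "dual_reg_support N k j = {t. 1 \<le> t \<and> t \<le> k \<and> (k - t) mod N = j - 1}"

lemma dual_reg_support_subset: "dual_reg_support N k j \<subseteq> {1..k}"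
  by (auto simp: dual_reg_support_def)

lemma finite_dual_reg_support [simp]: "finite (dual_reg_support N k j)"
  using dual_reg_support_subset by (rule finite_subset) simp

lemma dual_reg_support_disjoint:
  "i \<in> {1..N} \<Longrightarrow> j \<in> {1..N} \<Longrightarrow> i \<noteq> j \<Longrightarrow> dual_reg_support N k i \<inter> dual_reg_support N k j = {}"
  by (auto simp: dual_reg_support_def)

lemma Suc_mod_eq_pred_iff:
  assumes "j \<in> {1..N}"
  shows "Suc r mod N = j - 1 \<longleftrightarrow> r mod N = (if j = 1 then N else j - 1) - 1"
proof -
  have "r mod N < N"
    using assms by simp
  with assms show ?thesis
    by (auto simp: mod_Suc)
qed

lemma dual_reg_support_Suc:
  assumes j: "j \<in> {1..N}"
  shows "dual_reg_support N (Suc k) j =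
    (if j = 1 then insert (Suc k) (dual_reg_support N k N) else dual_reg_support N k (j - 1))"
proof (intro set_eqI)
  fix t
  consider "t = Suc k" | "t \<le> k" | "t > Suc k"
    by linarith
  then show "t \<in> dual_reg_support N (Suc k) j \<longleftrightarrow>
      t \<in> (if j = 1 then insert (Suc k) (dual_reg_support N k N) else dual_reg_support N k (j - 1))"
  proof cases
    case 2
    then have "(Suc k - t) mod N = j - 1 \<longleftrightarrow> (k - t) mod N = (if j = 1 then N else j - 1) - 1"
      by (simp only: Suc_diff_le Suc_mod_eq_pred_iff[OF j])
    with 2 j show ?thesis
      unfolding dual_reg_support_def mem_Collect_eq by auto
  qed (use j in \<open>auto simp: dual_reg_support_def\<close>)
qed

lemma dual_reg_eq_sum:
  "j \<in> {1..N} \<Longrightarrow> dual_reg N g k j = (\<Sum>t\<in>dual_reg_support N k j. g t)"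
proof (induction k arbitrary: j)
  case 0
  have "dual_reg_support N 0 j = {}"
    by (simp add: dual_reg_support_def)
  then show ?case
    by simp
next
  case (Suc k)
  have "Suc k \<notin> dual_reg_support N k N"
    by (simp add: dual_reg_support_def)
  show ?case
  proof (cases "j = 1")
    case True
    with Suc.IH[of N] Suc.prems \<open>Suc k \<notin> dual_reg_support N k N\<close> show ?thesis
      by (simp add: dual_reg_support_Suc)
  next
    case False
    with Suc.prems have "j - 1 \<in> {1..N}"
      by auto
    with False Suc.IH[of "j - 1"] Suc.prems show ?thesis
      by (simp add: dual_reg_support_Suc)
  qed
qed

locale dual_encoder_random_input = prob_space +
  fixes c :: "nat \<Rightarrow> 'a \<Rightarrow> 'b::{finite,comm_ring_1}" and Pc :: "nat \<Rightarrow> 'b \<Rightarrow> real" and N :: nat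
  assumes indep_input: "indep_vars (\<lambda>_. count_space UNIV) c {1..}"
    and pmf_vec_input: "\<And>k. k \<ge> 1 \<Longrightarrow> pmf_vec (c k) = Pc k"
    and N_pos: "N \<ge> 1"
begin

definition step_vars :: "nat \<Rightarrow> nat \<Rightarrow> 'a \<Rightarrow> 'b" where
  "step_vars k i \<omega> = (if i = 0 then c k \<omega> else dual_reg N (\<lambda>t. c t \<omega>) (k - 1) i)"

lemma indep_step_vars:
  assumes k: "k \<ge> 1"
  shows "indep_vars (\<lambda>_. count_space UNIV) (step_vars k) {0..N}"
proof -
  define K where "K i = (if i = 0 then {k} else dual_reg_support N (k - 1) i)" for i
  have indK: "indep_vars (\<lambda>_. count_space UNIV)
      (\<lambda>i \<omega>. (\<lambda>g. \<Sum>t\<in>K i. g t) (restrict (\<lambda>t. c t \<omega>) (K i))) {0..N}"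
  proof (rule indep_vars_blocks[OF indep_input])
    show "K i \<subseteq> {1..}" for i
      using k dual_reg_support_subset[of N "k - 1" i] by (auto simp: K_def)
    show "finite (K i)" for i
      by (simp add: K_def)
    show "disjoint_family_on K {0..N}"
      unfolding disjoint_family_on_def
    proof (intro ballI impI)
      fix i j assume ij: "i \<in> {0..N}" "j \<in> {0..N}" "i \<noteq> j"
      have "k \<notin> dual_reg_support N (k - 1) l" for l
        using k dual_reg_support_subset[of N "k - 1" l] by auto
      with ij show "K i \<inter> K j = {}"
        by (cases "i = 0 \<or> j = 0") (auto simp: K_def dual_reg_support_disjoint)
    qed
  qed
  have "(\<lambda>\<omega>. (\<lambda>g. \<Sum>t\<in>K i. g t) (restrict (\<lambda>t. c t \<omega>) (K i))) = step_vars k i"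
    if "i \<in> {0..N}" for i
    using that by (auto simp: K_def step_vars_def dual_reg_eq_sum)
  from iffD1[OF indep_vars_cong[OF refl this refl] indK] show ?thesis .
qed

lemma pmf_vec_dual_reg:
  "j \<in> {1..N} \<Longrightarrow> pmf_vec (\<lambda>\<omega>. dual_reg N (\<lambda>t. c t \<omega>) k j) = fwd_pmf N Pc k j"
proof (induction k arbitrary: j)
  case 0
  show ?case
    by (auto simp: pmf_vec_def delta0_def prob_space)
next
  case (Suc k)
  show ?case
  proof (cases "j = 1")
    case True
    have "pmf_vec (\<lambda>\<omega>. dual_reg N (\<lambda>t. c t \<omega>) (Suc k) j) =
        pmf_vec (\<lambda>\<omega>. step_vars (Suc k) 0 \<omega> + step_vars (Suc k) N \<omega>)"
      using True N_pos by (simp add: step_vars_def)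
    also have "\<dots> = pmf_conv (pmf_vec (step_vars (Suc k) 0)) (pmf_vec (step_vars (Suc k) N))"
      using N_pos by (intro pmf_vec_add_indep_vars[OF indep_step_vars]) auto
    also have "\<dots> = fwd_pmf N Pc (Suc k) j"
      using True N_pos Suc.IH[of N] pmf_vec_input[of "Suc k"] by (simp add: step_vars_def[abs_def])
    finally show ?thesis .
  next
    case False
    with Suc.prems have "j - 1 \<in> {1..N}"
      by auto
    with False Suc.IH[of "j - 1"] show ?thesis
      by simp
  qed
qed

lemma pmf_vec_step_vars:
  "k \<ge> 1 \<Longrightarrow> i \<in> {0..N} \<Longrightarrow> pmf_vec (step_vars k i) = (if i = 0 then Pc k else fwd_pmf N Pc (k - 1) i)"
  using pmf_vec_input pmf_vec_dual_reg[of i "k - 1"]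
  by (auto simp: step_vars_def[abs_def])

lemma dual_out_eq_step_vars:
  "dual_out h N (\<lambda>t. c t \<omega>) k = step_vars k 0 \<omega> + (\<Sum>j = 1..N - 1. h j * step_vars k j \<omega>)"
  by (auto simp: dual_out_def step_vars_def intro!: sum.cong)

lemma pmf_vec_dual_out:
  assumes k: "k \<ge> 1"
  shows "pmf_vec (\<lambda>\<omega>. dual_out h N (\<lambda>t. c t \<omega>) k) = fwd_out h N Pc k"
proof -
  have "pmf_vec (\<lambda>\<omega>. dual_out h N (\<lambda>t. c t \<omega>) k) =
      foldl pmf_conv (pmf_vec (step_vars k 0))
        (map (\<lambda>j. pmf_perm (h j) (pmf_vec (step_vars k j))) [1..<Suc (N - 1)])"
    unfolding dual_out_eq_step_vars by (rule pmf_vec_linear_comb_foldl[OF indep_step_vars[OF k]]) simp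
  also have "\<dots> = fwd_out h N Pc k"
    unfolding fwd_out_def using k N_pos
    by (auto simp: pmf_vec_step_vars intro!: arg_cong[where f = "foldl pmf_conv (Pc k)"] map_cong)
  finally show ?thesis .
qed

lemma pmf_vec_dual_out_sum:
  assumes k: "k \<ge> 1"
  shows "pmf_vec (\<lambda>\<omega>. dual_out h N (\<lambda>t. c t \<omega>) k) x =
    (\<Sum>(u, d) \<in> {(u, d). u \<in> PiE {1..N} (\<lambda>_. UNIV) \<and> d + (\<Sum>j = 1..N - 1. h j * u j) = x}.
      (\<Prod>j = 1..N. fwd_pmf N Pc (k - 1) j (u j)) * Pc k d)"
  unfolding dual_out_eq_step_vars pmf_vec_linear_comb_sum[OF indep_step_vars[OF k] diff_le_self]
  using k by (auto simp: pmf_vec_step_vars intro!: sum.cong prod.cong)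

end

lemma min_comp_poly_coeffs:
  fixes a z :: "'a::field poly"
  assumes z: "is_min_comp_poly a z" and deg: "degree a \<ge> 1"
    and a0: "coeff a 0 = 1" and lead: "lead_coeff a = 1"
  shows "coeff z 0 = 1" and "lead_coeff z = 1"
proof -
  define N where "N = degree a + degree z"
  have az: "a * z = 1 + monom 1 N"
    using z by (simp add: is_min_comp_poly_def N_def)
  have N: "N \<ge> 1"
    using deg by (simp add: N_def)
  have "coeff (a * z) 0 = 1"
    using N by (simp add: az)
  with a0 show "coeff z 0 = 1"
    by (simp add: coeff_mult_0)
  have "degree (1 + monom (1 :: 'a) N) = N"
    using N by (simp add: degree_add_eq_right degree_monom_eq)
  then have "lead_coeff (a * z) = 1"
    using N by (simp add: az)
  with lead show "lead_coeff z = 1"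
    by (simp add: lead_coeff_mult)
qed

lemma random_dual_encoder_pmfs:
  fixes c :: "nat \<Rightarrow> 'm \<Rightarrow> 'a::{finite,comm_ring_1}"
  assumes "prob_space M" and "prob_space.indep_vars M (\<lambda>_. count_space UNIV) c {1..}"
    and "\<forall>k\<ge>1. \<forall>x. measure M {\<omega> \<in> space M. c k \<omega> = x} = Pc k x"
    and N: "N \<ge> 1" and k: "k \<ge> 1"
  shows "prob_space.indep_vars M (\<lambda>_. count_space UNIV)
      (\<lambda>i \<omega>. if i = 0 then c k \<omega> else dual_reg N (\<lambda>t. c t \<omega>) (k - 1) i) {0..N}
    \<and> (\<forall>j\<in>{1..N}. \<forall>x. measure M {\<omega> \<in> space M. dual_reg N (\<lambda>t. c t \<omega>) k j = x} = fwd_pmf N Pc k j x)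
    \<and> (\<forall>x. fwd_out h N Pc k x =
          (\<Sum>(u, d) \<in> {(u, d). u \<in> PiE {1..N} (\<lambda>_. UNIV) \<and> d + (\<Sum>j = 1..N - 1. h j * u j) = x}.
            (\<Prod>j = 1..N. fwd_pmf N Pc (k - 1) j (u j)) * Pc k d)
      \<and> (\<Sum>(u, d) \<in> {(u, d). u \<in> PiE {1..N} (\<lambda>_. UNIV) \<and> d + (\<Sum>j = 1..N - 1. h j * u j) = x}.
            (\<Prod>j = 1..N. fwd_pmf N Pc (k - 1) j (u j)) * Pc k d)
        = measure M {\<omega> \<in> space M. dual_out h N (\<lambda>t. c t \<omega>) k = x})"
proof -
  interpret prob_space M
    by fact
  interpret dual_encoder_random_input M c Pc N
    using assms by unfold_locales (simp_all add: pmf_vec_def fun_eq_iff)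
  show ?thesis
    using indep_step_vars[OF k] pmf_vec_dual_reg pmf_vec_dual_out[OF k, of h]
      pmf_vec_dual_out_sum[OF k, of h]
    by (simp add: step_vars_def[abs_def] pmf_vec_def fun_eq_iff)
qed

theorem theorem1:
  fixes a f z :: "'a::{field,finite} poly" and n :: nat
  assumes char2: "CHAR('a) = 2"
    and n_pos: "n \<ge> 1"
    and a_deg: "degree a = n" and a_lead: "lead_coeff a = 1" and a_0: "coeff a 0 = 1"
    and f_deg: "degree f = n" and f_lead: "lead_coeff f = 1" and f_0: "coeff f 0 = 1"
    and z_min: "is_min_comp_poly a z"
  defines "N \<equiv> n + degree z"
    and "h \<equiv> coeff (f * z)"
  shows
    "(\<forall>b c :: nat \<Rightarrow> 'a.
        fps_of_poly f * Abs_fps (\<lambda>i. c (Suc i)) = fps_of_poly a * Abs_fps (\<lambda>i. b (Suc i))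
        \<longrightarrow> (\<forall>k\<ge>1. dual_out h N c k = b k))
     \<and>
     (\<forall>(M :: 'm measure) (c :: nat \<Rightarrow> 'm \<Rightarrow> 'a) (Pc :: nat \<Rightarrow> 'a \<Rightarrow> real).
        prob_space M
        \<and> prob_space.indep_vars M (\<lambda>_. count_space UNIV) c {1..}
        \<and> (\<forall>k\<ge>1. \<forall>x. measure M {\<omega> \<in> space M. c k \<omega> = x} = Pc k x)
        \<longrightarrow> (\<forall>k\<ge>1.
              prob_space.indep_vars M (\<lambda>_. count_space UNIV)
                 (\<lambda>i \<omega>. if i = 0 then c k \<omega> else dual_reg N (\<lambda>t. c t \<omega>) (k - 1) i) {0..N}
            \<and> (\<forall>j\<in>{1..N}. \<forall>x.
                 measure M {\<omega> \<in> space M. dual_reg N (\<lambda>t. c t \<omega>) k j = x} = fwd_pmf N Pc k j x)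
            \<and> (\<forall>x.
                 fwd_out h N Pc k x =
                   (\<Sum>(u, d) \<in> {(u, d). u \<in> PiE {1..N} (\<lambda>_. UNIV) \<and>
                                        d + (\<Sum>j = 1..N - 1. h j * u j) = x}.
                      (\<Prod>j = 1..N. fwd_pmf N Pc (k - 1) j (u j)) * Pc k d)
               \<and> (\<Sum>(u, d) \<in> {(u, d). u \<in> PiE {1..N} (\<lambda>_. UNIV) \<and>
                                        d + (\<Sum>j = 1..N - 1. h j * u j) = x}.
                      (\<Prod>j = 1..N. fwd_pmf N Pc (k - 1) j (u j)) * Pc k d)
                  = measure M {\<omega> \<in> space M. dual_out h N (\<lambda>t. c t \<omega>) k = x})))"
proof -
  have N: "N \<ge> 1"
    using n_pos by (simp add: N_def)
  have z0: "coeff z 0 = 1" and z_lead: "lead_coeff z = 1"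
    using min_comp_poly_coeffs[OF z_min] n_pos a_deg a_0 a_lead by simp_all
  have "a * z = 1 + monom 1 N"
    using z_min a_deg by (simp add: is_min_comp_poly_def N_def)
  then have AZ: "fps_of_poly a * fps_of_poly z = 1 - fps_X ^ N"
    using char2 by (simp flip: fps_of_poly_mult add: fps_of_poly_monom' minus_CHAR_2)
  have "fps_of_poly (f * z) = 1 + fps_X ^ N + (\<Sum>j = 1..N - 1. fps_const (h j) * fps_X ^ j)"
    unfolding h_def
  proof (rule fps_of_poly_eq_monic_unit[OF _ N])
    show "degree (f * z) = N"
      using f_lead z_lead f_deg by (simp add: degree_mult_eq N_def flip: leading_coeff_0_iff)
    show "coeff (f * z) 0 = 1" "lead_coeff (f * z) = 1"
      using f_0 z0 f_lead z_lead by (simp_all add: coeff_mult_0 lead_coeff_mult)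
  qed
  then have FZ: "fps_of_poly f * fps_of_poly z = 1 - fps_X ^ N + (\<Sum>j = 1..N - 1. fps_const (h j) * fps_X ^ j)"
    using char2 by (simp add: fps_of_poly_mult minus_CHAR_2)
  show ?thesis
    using dual_out_eq_info[OF N AZ FZ] random_dual_encoder_pmfs[OF _ _ _ N] by blast
qed

end
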